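(* For every marked poset $(P,A,\lambda)$, the marked order polytope $\mathcal{O}_{P,A}(\lambda)$ and the marked chain polytope $\mathcal{C}_{P,A}(\lambda)$ are both normal (lattice) polytopes.
   Context: A marked poset is a triple $(P,A,\lambda)$ where $(P,\prec)$ is a finite poset, $A\subseteq P$ contains all minimal and all maximal elements of $P$, and $\lambda:A\to\mathbb{Z}_{\ge 0}$, $a\mapsto\lambda_a$. The marked order polytope $\mathcal{O}_{P,A}(\lambda)\subset\mathbb{R}^{P\setminus A}$ is the set of $(x_p)_{p\in P\setminus A}$ with $x_p\le x_q$ for $p\prec q$ in $P\setminus A$, $x_p\le\lambda_a$ for $p\prec a$, $a\in A$, and $\lambda_b\le x_q$ for $b\prec q$, $b\in A$. The marked chain polytope $\mathcal{C}_{P,A}(\lambda)\subset\mathbb{R}^{P\setminus A}$ is the set of $(x_p)_{p\in P\setminus A}$ with $x_p\ge0$ for all $p$, and $x_{p_1}+\cdots+x_{p_n}\le\lambda_a-\lambda_b$ for every chain $b\prec p_n\prec\cdots\prec p_1\prec a$ with $n\ge1$, $a,b\in A$, $p_i\in P\setminus A$. A lattice polytope $Q\subset\mathbb{R}^d$ is normal if for every $n\in\mathbb{N}$ the set $nQ\cap\mathbb{Z}^d$ is the $n$-fold Minkowski sum of $Q\cap\mathbb{Z}^d$. *)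

theory Defs
  imports Complex_Main "HOL-Library.Function_Algebras"
begin

text \<open>A marked poset (P, A, lambda): P is a finite set carrying the strict partial order lt
  (only its restriction to P matters), A is a subset of P containing all minimal and all
  maximal elements of P, and lambda : A -> Z_{>=0} is given as a function into nat
  (only its values on A matter).\<close>

definition marked_poset :: "'a set \<Rightarrow> ('a \<Rightarrow> 'a \<Rightarrow> bool) \<Rightarrow> 'a set \<Rightarrow> bool" where
  "marked_poset P lt A \<longleftrightarrow>
     finite P \<and>
     (\<forall>p\<in>P. \<not> lt p p) \<and>
     (\<forall>p\<in>P. \<forall>q\<in>P. \<forall>r\<in>P. lt p q \<and> lt q r \<longrightarrow> lt p r) \<and>
     A \<subseteq> P \<and>
     (\<forall>p\<in>P. (\<forall>q\<in>P. \<not> lt q p) \<longrightarrow> p \<in> A) \<and>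
     (\<forall>p\<in>P. (\<forall>q\<in>P. \<not> lt p q) \<longrightarrow> p \<in> A)"

text \<open>Points of R^(P - A) are represented as functions 'a => real vanishing outside P - A.\<close>

definition marked_order_polytope ::
  "'a set \<Rightarrow> ('a \<Rightarrow> 'a \<Rightarrow> bool) \<Rightarrow> 'a set \<Rightarrow> ('a \<Rightarrow> nat) \<Rightarrow> ('a \<Rightarrow> real) set" where
  "marked_order_polytope P lt A lam =
     {x. (\<forall>p. p \<notin> P - A \<longrightarrow> x p = 0) \<and>
         (\<forall>p\<in>P - A. \<forall>q\<in>P - A. lt p q \<longrightarrow> x p \<le> x q) \<and>
         (\<forall>p\<in>P - A. \<forall>a\<in>A. lt p a \<longrightarrow> x p \<le> real (lam a)) \<and>
         (\<forall>b\<in>A. \<forall>q\<in>P - A. lt b q \<longrightarrow> real (lam b) \<le> x q)}"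

text \<open>A chain b < p_n < ... < p_1 < a with n >= 1 is encoded by the list [p_1, ..., p_n].\<close>

definition marked_chain_polytope ::
  "'a set \<Rightarrow> ('a \<Rightarrow> 'a \<Rightarrow> bool) \<Rightarrow> 'a set \<Rightarrow> ('a \<Rightarrow> nat) \<Rightarrow> ('a \<Rightarrow> real) set" where
  "marked_chain_polytope P lt A lam =
     {x. (\<forall>p. p \<notin> P - A \<longrightarrow> x p = 0) \<and>
         (\<forall>p\<in>P - A. 0 \<le> x p) \<and>
         (\<forall>a\<in>A. \<forall>b\<in>A. \<forall>ps. ps \<noteq> [] \<and> set ps \<subseteq> P - A \<and>
              sorted_wrt (\<lambda>u v. lt v u) ps \<and> lt b (last ps) \<and> lt (hd ps) a
              \<longrightarrow> sum_list (map x ps) \<le> real (lam a) - real (lam b))}"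

definition lattice_points :: "('a \<Rightarrow> real) set \<Rightarrow> ('a \<Rightarrow> real) set" where
  "lattice_points Q = {x \<in> Q. \<forall>p. x p \<in> \<int>}"

definition dilate :: "nat \<Rightarrow> ('a \<Rightarrow> real) set \<Rightarrow> ('a \<Rightarrow> real) set" where
  "dilate n Q = {(\<lambda>p. real n * y p) | y. y \<in> Q}"

fun minkowski_power :: "('a \<Rightarrow> real) set \<Rightarrow> nat \<Rightarrow> ('a \<Rightarrow> real) set" where
  "minkowski_power S 0 = {0}"
| "minkowski_power S (Suc n) = {y + z | y z. y \<in> minkowski_power S n \<and> z \<in> S}"

definition lattice_polytope :: "('a \<Rightarrow> real) set \<Rightarrow> bool" where
  "lattice_polytope Q \<longleftrightarrow>
     finite (lattice_points Q) \<and>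
     Q = {x. \<exists>S u. finite S \<and> S \<subseteq> lattice_points Q \<and> (\<forall>s\<in>S. 0 \<le> u s) \<and>
                   sum u S = 1 \<and> x = (\<lambda>p. \<Sum>s\<in>S. u s * s p)}"

definition normal_polytope :: "('a \<Rightarrow> real) set \<Rightarrow> bool" where
  "normal_polytope Q \<longleftrightarrow>
     (\<forall>n\<ge>1. lattice_points (dilate n Q) = minkowski_power (lattice_points Q) n)"

end

theory Submission
  imports Defs
begin

text \<open>Both polytopes are closed under convex combinations, so it suffices to write every point
  as a convex combination of lattice points and every lattice point of the n-th dilate as a sum
  of n lattice points. For the order polytope this is done by rounding coordinatewise with
  monotone maps that fix the marks, which preserves all order inequalities: a point x is the
  average of the points floor (x + t) over suitable thresholds t in [0, 1), and an integral point
  of the n-th dilate is the sum of the points floor ((x + k) / n), k < n (Hermite's identity).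
  The chain polytope is the image of the order polytope under Stanley's transfer map
  x_p \<mapsto> x_p - max {x_q | q < p}, a bijection with a recursively defined inverse that
  preserves integrality; since the maximum commutes with monotone maps, the transfer map carries
  these decompositions over to the chain polytope.\<close>

lemma sum_floor_shift_div_eq:
  fixes v :: real assumes "v \<in> \<int>" and "n \<ge> 1"
  shows "(\<Sum>k<n. real_of_int \<lfloor>(v + real k) / real n\<rfloor>) = v"
proof -
  have step: "(\<Sum>k<n. (m + 1 + int k) div int n) = (\<Sum>k<n. (m + int k) div int n) + 1" for m
  proof -
    define g where "g k = (m + int k) div int n" for k
    have "(\<Sum>k<n. g (Suc k)) + g 0 = (\<Sum>k<n. g k) + g n"
      using sum.lessThan_Suc_shift[of g n] by simp
    moreover have "g n = g 0 + 1" unfolding g_def using assms(2) by (simp add: div_add_self2)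
    ultimately show ?thesis unfolding g_def by (simp add: add.assoc)
  qed
  have hermite: "(\<Sum>k<n. (m + int k) div int n) = m" for m
  proof (induction m rule: int_induct[where k=0])
    case base then show ?case by (simp add: div_pos_pos_trivial)
  next
    case (step1 i) then show ?case using step[of i] by simp
  next
    case (step2 i) then show ?case using step[of "i - 1"] by simp
  qed
  obtain m where m: "v = real_of_int m" using assms(1) by (auto elim: Ints_cases)
  have "\<lfloor>(v + real k) / real n\<rfloor> = (m + int k) div int n" for k
    using floor_divide_of_int_eq[of "m + int k" "int n"] by (simp add: m)
  then show ?thesis using hermite[of m] by (simp add: m flip: of_int_sum)
qed

definition next_point :: "real set \<Rightarrow> real \<Rightarrow> real" where
  "next_point T t = Min ({s\<in>T. t < s} \<union> {1})"

lemma next_point_gt: "finite T \<Longrightarrow> t < 1 \<Longrightarrow> t < next_point T t"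
  unfolding next_point_def by (subst Min_gr_iff) auto

lemma sum_next_point_diff:
  assumes "finite T" "T \<subseteq> {0..<1}" "s \<in> T"
  shows "(\<Sum>t\<in>{t\<in>T. s \<le> t}. next_point T t - t) = 1 - s"
  using assms(3)
proof (induction "card {t\<in>T. s \<le> t}" arbitrary: s rule: less_induct)
  case less
  show ?case
  proof (cases "{t\<in>T. s < t} = {}")
    case True
    then have "{t\<in>T. s \<le> t} = {s}" using less.prems by force
    moreover have "next_point T s = 1" unfolding next_point_def True by simp
    ultimately show ?thesis by simp
  next
    case False
    define s' where "s' = Min {t\<in>T. s < t}"
    have s': "s' \<in> T" "s < s'" and s'_least: "\<And>t. t \<in> T \<Longrightarrow> s < t \<Longrightarrow> s' \<le> t"
      using Min_in[of "{t\<in>T. s < t}"] Min_le[of "{t\<in>T. s < t}"] False assms(1)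
      unfolding s'_def by auto
    have "next_point T s = s'"
      unfolding next_point_def using s' s'_least assms
      by (intro Min_eqI) auto
    moreover have split: "{t\<in>T. s \<le> t} = insert s {t\<in>T. s' \<le> t}" "s \<notin> {t\<in>T. s' \<le> t}"
      using s' s'_least less.prems by force+
    moreover have "(\<Sum>t\<in>{t\<in>T. s' \<le> t}. next_point T t - t) = 1 - s'"
      using less.hyps[OF _ s'(1)] split assms(1) by simp
    ultimately show ?thesis using assms(1) by simp
  qed
qed

lemma floor_add_fraction:
  fixes v t :: real assumes "0 \<le> t" "t < 1"
  shows "\<lfloor>v + t\<rfloor> = \<lfloor>v\<rfloor> + (if 1 - frac v \<le> t then 1 else 0)"
proof -
  have "real_of_int \<lfloor>v\<rfloor> \<le> v" "v < real_of_int \<lfloor>v\<rfloor> + 1" by linarith+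
  with assms show ?thesis
    by (cases "1 - frac v \<le> t") (simp_all add: frac_def floor_eq_iff; linarith)+
qed

text \<open>As t runs through [0, 1), floor (v + t) jumps from floor v to floor v + 1 exactly at
  t = 1 - frac v. Taking these jump points (and 0) as thresholds, weighted by the gap to the next
  one, the weighted average of floor (v + t) is floor v + frac v = v.\<close>

lemma convex_sum_floor_shifts:
  fixes V :: "real set" assumes "finite V"
  obtains T w where "finite T" "T \<subseteq> {0..<1}" "\<forall>t\<in>T. 0 \<le> w t" "sum w T = 1"
    "\<And>v. v \<in> V \<Longrightarrow> (\<Sum>t\<in>T. w t * real_of_int \<lfloor>v + t\<rfloor>) = v"
proof
  define T where "T = insert 0 ((\<lambda>v. 1 - frac v) ` {v\<in>V. frac v \<noteq> 0})"
  define w where "w t = next_point T t - t" for t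
  show fin: "finite T" unfolding T_def using assms by simp
  show sub: "T \<subseteq> {0..<1}"
    unfolding T_def using frac_lt_1 frac_ge_0
    by (fastforce simp: order.order_iff_strict simp del: frac_eq_0_iff)
  show "\<forall>t\<in>T. 0 \<le> w t"
    using sub next_point_gt[OF fin] unfolding w_def by (fastforce simp: less_imp_le)
  have "{t\<in>T. 0 \<le> t} = T" using sub by auto
  then show sum1: "sum w T = 1"
    using sum_next_point_diff[OF fin sub, of 0] unfolding w_def T_def by auto
  fix v assume "v \<in> V"
  have upper: "(\<Sum>t\<in>{t\<in>T. 1 - frac v \<le> t}. w t) = frac v"
  proof (cases "frac v = 0")
    case True
    then have "{t\<in>T. 1 - frac v \<le> t} = {}" using sub by (force simp del: frac_eq_0_iff)
    with True show ?thesis by (metis sum.empty)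
  next
    case False
    then have "1 - frac v \<in> T" unfolding T_def using \<open>v \<in> V\<close> by auto
    then show ?thesis using sum_next_point_diff[OF fin sub] unfolding w_def by simp
  qed
  have "(\<Sum>t\<in>T. w t * real_of_int \<lfloor>v + t\<rfloor>)
      = (\<Sum>t\<in>T. w t * real_of_int \<lfloor>v\<rfloor> + (if 1 - frac v \<le> t then w t else 0))"
    using sub by (intro sum.cong) (auto simp: floor_add_fraction distrib_left)
  also have "\<dots> = real_of_int \<lfloor>v\<rfloor> + (\<Sum>t\<in>{t\<in>T. 1 - frac v \<le> t}. w t)"
    using fin sum1 by (simp add: sum.distrib sum.inter_filter flip: sum_distrib_right)
  finally show "(\<Sum>t\<in>T. w t * real_of_int \<lfloor>v + t\<rfloor>) = v"
    using upper by (simp add: frac_def)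
qed

lemma minkowski_power_iff:
  "y \<in> minkowski_power S n \<longleftrightarrow> (\<exists>z. (\<forall>k<n. z k \<in> S) \<and> y = (\<lambda>p. \<Sum>k<n. z k p))"
proof (induction n arbitrary: y)
  case 0 then show ?case by (simp add: zero_fun_def)
next
  case (Suc n)
  show ?case
  proof
    assume "y \<in> minkowski_power S (Suc n)"
    then obtain z s where z: "\<forall>k<n. z k \<in> S" "s \<in> S" "y = (\<lambda>p. \<Sum>k<n. z k p) + s"
      using Suc.IH by auto
    have "(\<Sum>k<n. (z(n := s)) k p) = (\<Sum>k<n. z k p)" for p by (rule sum.cong) auto
    then have "(\<Sum>k<Suc n. (z(n := s)) k p) = (\<Sum>k<n. z k p) + s p" for p by simp
    then show "\<exists>z. (\<forall>k<Suc n. z k \<in> S) \<and> y = (\<lambda>p. \<Sum>k<Suc n. z k p)"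
      using z by (intro exI[of _ "z(n := s)"]) (simp add: less_Suc_eq plus_fun_def)
  next
    assume "\<exists>z. (\<forall>k<Suc n. z k \<in> S) \<and> y = (\<lambda>p. \<Sum>k<Suc n. z k p)"
    then obtain z where z: "\<forall>k<Suc n. z k \<in> S" "y = (\<lambda>p. \<Sum>k<n. z k p) + z n"
      by (auto simp: plus_fun_def)
    then have "(\<lambda>p. \<Sum>k<n. z k p) \<in> minkowski_power S n"
      unfolding Suc.IH using z(1) by (intro exI[of _ z]) simp
    then show "y \<in> minkowski_power S (Suc n)" using z by auto
  qed
qed

lemma lattice_polytopeI:
  fixes Q :: "('a \<Rightarrow> real) set"
  assumes convex: "\<And>(K::('a \<Rightarrow> real) set) u z. finite K \<Longrightarrow> \<forall>k\<in>K. 0 \<le> u k \<and> z k \<in> Q \<Longrightarrow>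
        sum u K = 1 \<Longrightarrow> (\<lambda>p. \<Sum>k\<in>K. u k * z k p) \<in> Q"
    and finite: "finite (lattice_points Q)"
    and decompose: "\<And>x. x \<in> Q \<Longrightarrow> \<exists>(K::real set) w z. finite K \<and>
        (\<forall>k\<in>K. 0 \<le> w k \<and> z k \<in> lattice_points Q) \<and> sum w K = 1 \<and> x = (\<lambda>p. \<Sum>k\<in>K. w k * z k p)"
  shows "lattice_polytope Q"
  unfolding lattice_polytope_def
proof (intro conjI finite set_eqI iffI)
  fix x assume "x \<in> Q"
  then obtain K w z where K: "finite (K::real set)" "\<forall>k\<in>K. 0 \<le> w k \<and> z k \<in> lattice_points Q"
      "sum w K = 1" "x = (\<lambda>p. \<Sum>k\<in>K. w k * z k p)"
    using decompose by blast
  define u where "u s = sum w {k\<in>K. z k = s}" for s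
  have "(\<Sum>s\<in>z ` K. u s * s p) = (\<Sum>s\<in>z ` K. \<Sum>k\<in>{k\<in>K. z k = s}. w k * z k p)" for p
    unfolding u_def by (rule sum.cong) (auto simp: sum_distrib_right)
  also have "\<dots> p = (\<Sum>k\<in>K. w k * z k p)" for p
    using sum.image_gen[OF K(1), of "\<lambda>k. w k * z k p" z] by simp
  moreover have "sum u (z ` K) = 1" unfolding u_def using sum.image_gen[OF K(1), of w z] K(3) by simp
  moreover have "\<forall>s\<in>z ` K. 0 \<le> u s" unfolding u_def using K by (auto intro: sum_nonneg)
  ultimately show "x \<in> {x. \<exists>S u. finite S \<and> S \<subseteq> lattice_points Q \<and> (\<forall>s\<in>S. 0 \<le> u s) \<and>
      sum u S = 1 \<and> x = (\<lambda>p. \<Sum>s\<in>S. u s * s p)}"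
    using K by (intro CollectI exI[of _ "z ` K"] exI[of _ u]) auto
next
  fix x assume "x \<in> {x. \<exists>S u. finite S \<and> S \<subseteq> lattice_points Q \<and> (\<forall>s\<in>S. 0 \<le> u s) \<and>
      sum u S = 1 \<and> x = (\<lambda>p. \<Sum>s\<in>S. u s * s p)}"
  then obtain S u where "finite S" "S \<subseteq> lattice_points Q" "\<forall>s\<in>S. 0 \<le> u s" "sum u S = 1"
      "x = (\<lambda>p. \<Sum>s\<in>S. u s * s p)"
    by blast
  then show "x \<in> Q" using convex[of S u id] by (auto simp: lattice_points_def)
qed

lemma normal_polytopeI:
  fixes Q :: "('a \<Rightarrow> real) set"
  assumes convex: "\<And>(K::nat set) u z. finite K \<Longrightarrow> \<forall>k\<in>K. 0 \<le> u k \<and> z k \<in> Q \<Longrightarrow>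
        sum u K = 1 \<Longrightarrow> (\<lambda>p. \<Sum>k\<in>K. u k * z k p) \<in> Q"
    and decompose: "\<And>n x. n \<ge> 1 \<Longrightarrow> x \<in> lattice_points (dilate n Q) \<Longrightarrow>
        \<exists>z. (\<forall>k<n. z k \<in> lattice_points Q) \<and> x = (\<lambda>p. \<Sum>k<n. z k p)"
  shows "normal_polytope Q"
  unfolding normal_polytope_def
proof (intro allI impI set_eqI iffI)
  fix n :: nat and x assume "n \<ge> 1" "x \<in> lattice_points (dilate n Q)"
  then show "x \<in> minkowski_power (lattice_points Q) n"
    unfolding minkowski_power_iff using decompose by blast
next
  fix n :: nat and x assume n: "n \<ge> 1"
    and "x \<in> minkowski_power (lattice_points Q) n"
  then obtain z where z: "\<forall>k<n. z k \<in> lattice_points Q" "x = (\<lambda>p. \<Sum>k<n. z k p)"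
    unfolding minkowski_power_iff by blast
  have "(\<lambda>p. \<Sum>k\<in>{..<n}. 1 / real n * z k p) \<in> Q"
    using z(1) n by (intro convex) (auto simp: lattice_points_def)
  moreover have "x = (\<lambda>p. real n * (\<Sum>k\<in>{..<n}. 1 / real n * z k p))"
    using z(2) n by (simp add: sum_distrib_left)
  ultimately have "x \<in> dilate n Q"
    unfolding dilate_def by (intro CollectI exI[of _ "\<lambda>p. \<Sum>k<n. 1 / real n * z k p"]) simp
  moreover have "x p \<in> \<int>" for p
    using z unfolding lattice_points_def by (auto intro: Ints_sum)
  ultimately show "x \<in> lattice_points (dilate n Q)" unfolding lattice_points_def by blast
qed

lemma dilate_Collect:
  assumes "n \<ge> 1" and "\<And>y. R (\<lambda>p. real n * y p) \<longleftrightarrow> S y"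
  shows "dilate n (Collect S) = Collect R"
proof (intro set_eqI iffI)
  fix x assume "x \<in> dilate n (Collect S)"
  then show "x \<in> Collect R" unfolding dilate_def using assms(2) by auto
next
  fix x assume "x \<in> Collect R"
  moreover have x: "x = (\<lambda>p. real n * (x p / real n))" using assms(1) by auto
  ultimately have "S (\<lambda>p. x p / real n)"
    using assms(2)[of "\<lambda>p. x p / real n"] by (metis mem_Collect_eq)
  then show "x \<in> dilate n (Collect S)"
    unfolding dilate_def by (intro CollectI exI[of _ "\<lambda>p. x p / real n"] conjI x) simp
qed

lemma finite_lattice_points_bounded:
  assumes "finite D" and "\<And>x p. x \<in> Q \<Longrightarrow> (p \<in> D \<longrightarrow> m \<le> x p \<and> x p \<le> M) \<and> (p \<notin> D \<longrightarrow> x p = 0)"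
  shows "finite (lattice_points Q)"
proof (rule finite_subset)
  let ?Z = "real_of_int ` {\<lfloor>m\<rfloor>..\<lceil>M\<rceil>}"
  have "x p \<in> ?Z" if "x \<in> lattice_points Q" "p \<in> D" for x p
  proof -
    have "x p \<in> \<int>" "m \<le> x p" "x p \<le> M" using assms(2) that unfolding lattice_points_def by auto
    then obtain k where k: "x p = real_of_int k" "m \<le> real_of_int k" "real_of_int k \<le> M"
      by (auto elim: Ints_cases)
    then have "k \<in> {\<lfloor>m\<rfloor>..\<lceil>M\<rceil>}"
      unfolding atLeastAtMost_iff floor_le_iff le_ceiling_iff by linarith
    with k(1) show ?thesis by blast
  qed
  moreover have "x p = 0" if "x \<in> lattice_points Q" "p \<notin> D" for x p
    using assms(2) that unfolding lattice_points_def by blast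
  ultimately show "lattice_points Q \<subseteq> {x. \<forall>p. (p \<in> D \<longrightarrow> x p \<in> ?Z) \<and> (p \<notin> D \<longrightarrow> x p = 0)}"
    by blast
  show "finite {x. \<forall>p. (p \<in> D \<longrightarrow> x p \<in> ?Z) \<and> (p \<notin> D \<longrightarrow> x p = 0)}"
    using assms(1) by (intro finite_set_of_finite_funs) auto
qed

lemma sum_list_sum_swap:
  "sum_list (map (\<lambda>p. \<Sum>k\<in>K. f k p) ps) = (\<Sum>k\<in>K. sum_list (map (f k) ps))"
  by (induction ps) (simp_all add: sum.distrib)

locale marked_poset_structure =
  fixes P :: "'a set" and lt :: "'a \<Rightarrow> 'a \<Rightarrow> bool" and A :: "'a set"
  assumes marked: "marked_poset P lt A"
begin

lemma finite_P: "finite P"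
  and irrefl: "p \<in> P \<Longrightarrow> \<not> lt p p"
  and trans: "p \<in> P \<Longrightarrow> q \<in> P \<Longrightarrow> r \<in> P \<Longrightarrow> lt p q \<Longrightarrow> lt q r \<Longrightarrow> lt p r"
  and A_subset: "A \<subseteq> P"
  and minimal_in_A: "p \<in> P \<Longrightarrow> \<forall>q\<in>P. \<not> lt q p \<Longrightarrow> p \<in> A"
  and maximal_in_A: "p \<in> P \<Longrightarrow> \<forall>q\<in>P. \<not> lt p q \<Longrightarrow> p \<in> A"
  using marked unfolding marked_poset_def by blast+

lemma finite_A: "finite A"
  using finite_P A_subset by (rule finite_subset[rotated])

definition below_rel :: "('a \<times> 'a) set" where
  "below_rel = {(q, p). q \<in> P \<and> p \<in> P \<and> lt q p}"

lemma wf_below_rel: "wf below_rel" and wf_converse_below_rel: "wf (below_rel\<inverse>)"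
proof -
  have "below_rel \<subseteq> P \<times> P" unfolding below_rel_def by auto
  then have fin: "finite below_rel" using finite_P finite_subset by blast
  have "trans below_rel" unfolding below_rel_def by (rule transI) (auto intro: trans)
  then have acyc: "acyclic below_rel"
    unfolding acyclic_def below_rel_def using irrefl by (simp add: trancl_id)
  show "wf below_rel" using fin acyc by (rule finite_acyclic_wf)
  show "wf (below_rel\<inverse>)" using fin acyc by (intro finite_acyclic_wf) (simp_all add: acyclic_converse)
qed

lemma exists_marked_below:
  assumes "p \<in> P - A" shows "\<exists>b\<in>A. lt b p"
proof -
  have "\<exists>b\<in>A. b = p \<or> lt b p" if "p \<in> P" for p
    using that
  proof (induction p rule: wf_induct_rule[OF wf_below_rel])
    case (1 p)
    show ?case
    proof (cases "p \<in> A")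
      case False
      then obtain q where q: "q \<in> P" "lt q p" using minimal_in_A[OF 1(2)] by blast
      then have "(q, p) \<in> below_rel" using 1(2) unfolding below_rel_def by blast
      with 1(1) q(1) obtain b where "b \<in> A" "b = q \<or> lt b q" by blast
      with q 1(2) show ?thesis using trans[of b q p] A_subset by blast
    qed blast
  qed
  from this[of p] assms show ?thesis by blast
qed

lemma exists_marked_above:
  assumes "p \<in> P - A" shows "\<exists>a\<in>A. lt p a"
proof -
  have "\<exists>a\<in>A. a = p \<or> lt p a" if "p \<in> P" for p
    using that
  proof (induction p rule: wf_induct_rule[OF wf_converse_below_rel])
    case (1 p)
    show ?case
    proof (cases "p \<in> A")
      case False
      then obtain q where q: "q \<in> P" "lt p q" using maximal_in_A[OF 1(2)] by blast
      then have "(q, p) \<in> below_rel\<inverse>" using 1(2) unfolding below_rel_def by blast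
      with 1(1) q(1) obtain a where "a \<in> A" "a = q \<or> lt q a" by blast
      with q 1(2) show ?thesis using trans[of p q a] A_subset by blast
    qed blast
  qed
  from this[of p] assms show ?thesis by blast
qed

definition unmarked_chain :: "'a list \<Rightarrow> bool" where
  "unmarked_chain ps \<longleftrightarrow> ps \<noteq> [] \<and> set ps \<subseteq> P - A \<and> sorted_wrt (\<lambda>u v. lt v u) ps"

definition order_point :: "('a \<Rightarrow> real) \<Rightarrow> ('a \<Rightarrow> real) \<Rightarrow> bool" where
  "order_point L x \<longleftrightarrow> (\<forall>p. p \<notin> P - A \<longrightarrow> x p = 0) \<and>
     (\<forall>p\<in>P - A. \<forall>q\<in>P - A. lt p q \<longrightarrow> x p \<le> x q) \<and>
     (\<forall>p\<in>P - A. \<forall>a\<in>A. lt p a \<longrightarrow> x p \<le> L a) \<and>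
     (\<forall>b\<in>A. \<forall>q\<in>P - A. lt b q \<longrightarrow> L b \<le> x q)"

definition chain_point :: "('a \<Rightarrow> real) \<Rightarrow> ('a \<Rightarrow> real) \<Rightarrow> bool" where
  "chain_point L x \<longleftrightarrow> (\<forall>p. p \<notin> P - A \<longrightarrow> x p = 0) \<and> (\<forall>p\<in>P - A. 0 \<le> x p) \<and>
     (\<forall>a\<in>A. \<forall>b\<in>A. \<forall>ps. unmarked_chain ps \<and> lt b (last ps) \<and> lt (hd ps) a
        \<longrightarrow> sum_list (map x ps) \<le> L a - L b)"

lemma marked_order_polytope_eq:
  "marked_order_polytope P lt A lam = {x. order_point (\<lambda>a. real (lam a)) x}"
  unfolding marked_order_polytope_def order_point_def by simp

lemma marked_chain_polytope_eq:
  "marked_chain_polytope P lt A lam = {x. chain_point (\<lambda>a. real (lam a)) x}"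
  unfolding marked_chain_polytope_def chain_point_def unmarked_chain_def by simp

lemma chain_pointD:
  "chain_point L x \<Longrightarrow> a \<in> A \<Longrightarrow> b \<in> A \<Longrightarrow> unmarked_chain ps \<Longrightarrow> lt b (last ps) \<Longrightarrow> lt (hd ps) a
    \<Longrightarrow> sum_list (map x ps) \<le> L a - L b"
  unfolding chain_point_def by blast

text \<open>lower_max ranges over all elements below p, not only over those covered by p; on order
  points this gives the same value and avoids the covering relation.\<close>

definition lower_values :: "('a \<Rightarrow> real) \<Rightarrow> ('a \<Rightarrow> real) \<Rightarrow> 'a \<Rightarrow> real set" where
  "lower_values L x p = L ` {b\<in>A. lt b p} \<union> x ` {q\<in>P - A. lt q p}"

definition lower_max :: "('a \<Rightarrow> real) \<Rightarrow> ('a \<Rightarrow> real) \<Rightarrow> 'a \<Rightarrow> real" where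
  "lower_max L x p = Max (lower_values L x p)"

definition transfer :: "('a \<Rightarrow> real) \<Rightarrow> ('a \<Rightarrow> real) \<Rightarrow> 'a \<Rightarrow> real" where
  "transfer L x p = (if p \<in> P - A then x p - lower_max L x p else 0)"

lemma finite_lower_values: "finite (lower_values L x p)"
  unfolding lower_values_def using finite_A finite_P by auto

lemma lower_values_nonempty: "p \<in> P - A \<Longrightarrow> lower_values L x p \<noteq> {}"
  unfolding lower_values_def using exists_marked_below by blast

lemma lower_max_ge: "v \<in> lower_values L x p \<Longrightarrow> v \<le> lower_max L x p"
  unfolding lower_max_def using finite_lower_values by (rule Max_ge)

lemma lower_max_in: "p \<in> P - A \<Longrightarrow> lower_max L x p \<in> lower_values L x p"
  unfolding lower_max_def using finite_lower_values lower_values_nonempty by (rule Max_in)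

lemma lower_max_le: "order_point L x \<Longrightarrow> p \<in> P - A \<Longrightarrow> lower_max L x p \<le> x p"
  unfolding lower_max_def using finite_lower_values lower_values_nonempty
  by (subst Max_le_iff) (auto simp: lower_values_def order_point_def)

lemma sum_transfer_chain_le:
  assumes "order_point L x" "b \<in> A" "unmarked_chain ps" "lt b (last ps)"
  shows "sum_list (map (transfer L x) ps) \<le> x (hd ps) - L b"
  using assms(3,4)
proof (induction ps)
  case (Cons p ps)
  have p: "p \<in> P - A" using Cons.prems by (simp add: unmarked_chain_def)
  show ?case
  proof (cases ps)
    case Nil
    have "L b \<le> lower_max L x p"
      using Cons.prems Nil assms(2) by (intro lower_max_ge) (simp add: lower_values_def)
    then show ?thesis using p Nil by (simp add: transfer_def)
  next
    case (Cons q qs)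
    with Cons.prems have "unmarked_chain ps" "lt b (last ps)" "q \<in> P - A" "lt q p"
      by (auto simp: unmarked_chain_def)
    moreover from this have "x q \<le> lower_max L x p" by (intro lower_max_ge) (simp add: lower_values_def)
    ultimately show ?thesis using Cons.IH p \<open>ps = q # qs\<close> by (simp add: transfer_def)
  qed
qed (simp add: unmarked_chain_def)

lemma chain_point_transfer:
  assumes "order_point L x" shows "chain_point L (transfer L x)"
  unfolding chain_point_def
proof (intro conjI ballI allI impI)
  fix p assume "p \<in> P - A"
  then show "0 \<le> transfer L x p" using lower_max_le[OF assms] by (simp add: transfer_def)
next
  fix a b ps assume "a \<in> A" "b \<in> A" and ps: "unmarked_chain ps \<and> lt b (last ps) \<and> lt (hd ps) a"
  then have "hd ps \<in> P - A" unfolding unmarked_chain_def using hd_in_set by blast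
  then have "x (hd ps) \<le> L a" using assms \<open>a \<in> A\<close> ps unfolding order_point_def by blast
  then show "sum_list (map (transfer L x) ps) \<le> L a - L b"
    using sum_transfer_chain_le[OF assms \<open>b \<in> A\<close>] ps by force
qed (auto simp: transfer_def)

definition transfer_inv :: "('a \<Rightarrow> real) \<Rightarrow> ('a \<Rightarrow> real) \<Rightarrow> 'a \<Rightarrow> real" where
  "transfer_inv L y p = (if p \<in> P - A then
     wfrec below_rel (\<lambda>f p. y p + Max (L ` {b\<in>A. lt b p} \<union> f ` {q\<in>P - A. lt q p})) p else 0)"

lemma transfer_inv_eq:
  assumes "p \<in> P - A" shows "transfer_inv L y p = y p + lower_max L (transfer_inv L y) p"
proof -
  let ?F = "\<lambda>f p. y p + Max (L ` {b\<in>A. lt b p} \<union> f ` {q\<in>P - A. lt q p})"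
  have "transfer_inv L y p = ?F (cut (wfrec below_rel ?F) below_rel p) p"
    using assms wfrec[OF wf_below_rel] by (simp add: transfer_inv_def)
  moreover have "cut (wfrec below_rel ?F) below_rel p ` {q\<in>P - A. lt q p}
      = transfer_inv L y ` {q\<in>P - A. lt q p}"
    using assms by (intro image_cong) (auto simp: cut_apply below_rel_def transfer_inv_def)
  ultimately show ?thesis unfolding lower_max_def lower_values_def by simp
qed

lemma transfer_inv_eq_chain_sum:
  assumes "p \<in> P - A"
  obtains b ps where "b \<in> A" "unmarked_chain ps" "hd ps = p" "lt b (last ps)"
    "transfer_inv L y p = L b + sum_list (map y ps)"
proof -
  have "\<exists>b ps. b \<in> A \<and> unmarked_chain ps \<and> hd ps = p \<and> lt b (last ps) \<and>
      transfer_inv L y p = L b + sum_list (map y ps)"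
    using assms
  proof (induction p rule: wf_induct_rule[OF wf_below_rel])
    case (1 p)
    consider (marked) b where "b \<in> A" "lt b p" "lower_max L (transfer_inv L y) p = L b"
      | (unmarked) q where "q \<in> P - A" "lt q p" "lower_max L (transfer_inv L y) p = transfer_inv L y q"
      using lower_max_in[OF 1(2), of L "transfer_inv L y"] unfolding lower_values_def by blast
    then show ?case
    proof cases
      case marked
      then show ?thesis using 1(2) transfer_inv_eq[OF 1(2)]
        by (intro exI[of _ b] exI[of _ "[p]"]) (simp add: unmarked_chain_def)
    next
      case unmarked
      then have "(q, p) \<in> below_rel" using 1(2) unfolding below_rel_def by auto
      with 1(1) unmarked(1) obtain c ps where c: "c \<in> A" "unmarked_chain ps" "hd ps = q"
        "lt c (last ps)" "transfer_inv L y q = L c + sum_list (map y ps)"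
        by blast
      have "lt r p" if "r \<in> set ps" for r
      proof (cases "r = q")
        case False
        then have "lt r q" using c(2,3) that by (cases ps) (auto simp: unmarked_chain_def)
        then show ?thesis using trans[of r q p] unmarked 1(2) c(2) that
          by (auto simp: unmarked_chain_def)
      qed (use unmarked in simp)
      then have "unmarked_chain (p # ps)" using c(2) 1(2) by (auto simp: unmarked_chain_def)
      then show ?thesis using c 1(2) transfer_inv_eq[OF 1(2)] unmarked(3)
        by (intro exI[of _ c] exI[of _ "p # ps"]) (auto simp: unmarked_chain_def)
    qed
  qed
  then show ?thesis using that by blast
qed

lemma order_point_transfer_inv:
  assumes "chain_point L y" shows "order_point L (transfer_inv L y)"
proof -
  have lower: "v \<le> transfer_inv L y q" if "q \<in> P - A" "v \<in> lower_values L (transfer_inv L y) q" for q v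
  proof -
    have "0 \<le> y q" using assms that(1) unfolding chain_point_def by blast
    then show ?thesis using lower_max_ge[OF that(2)] transfer_inv_eq[OF that(1), of L y] by linarith
  qed
  have upper: "transfer_inv L y p \<le> L a" if p: "p \<in> P - A" and "a \<in> A" "lt p a" for p a
  proof -
    obtain b ps where "b \<in> A" "unmarked_chain ps" "hd ps = p" "lt b (last ps)"
        "transfer_inv L y p = L b + sum_list (map y ps)"
      by (rule transfer_inv_eq_chain_sum[OF p])
    then show ?thesis using chain_pointD[OF assms that(2)] that(3) by fastforce
  qed
  show ?thesis
    unfolding order_point_def using lower upper
    by (auto simp: lower_values_def transfer_inv_def)
qed

lemma transfer_transfer_inv: "chain_point L y \<Longrightarrow> transfer L (transfer_inv L y) = y"
  using transfer_inv_eq unfolding transfer_def chain_point_def by fastforce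

lemma transfer_inv_Ints:
  assumes "\<forall>p. y p \<in> \<int>" "\<forall>a\<in>A. L a \<in> \<int>" shows "transfer_inv L y p \<in> \<int>"
proof (cases "p \<in> P - A")
  case True
  then obtain b ps where "b \<in> A" "transfer_inv L y p = L b + sum_list (map y ps)"
    using transfer_inv_eq_chain_sum by metis
  moreover have "sum_list (map y ps) \<in> \<int>" using assms(1) by (induction ps) auto
  ultimately show ?thesis using assms(2) by simp
next
  case False then show ?thesis by (auto simp: transfer_inv_def)
qed

lemma transfer_Ints:
  assumes "\<forall>p. x p \<in> \<int>" "\<forall>a\<in>A. L a \<in> \<int>" shows "transfer L x p \<in> \<int>"
proof (cases "p \<in> P - A")
  case True
  then have "lower_max L x p \<in> \<int>"
    using lower_max_in[OF True, of L x] assms unfolding lower_values_def by auto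
  then show ?thesis using True assms by (simp add: transfer_def)
next
  case False then show ?thesis by (auto simp: transfer_def)
qed

lemma order_point_convex_sum:
  assumes "finite K" "\<forall>k\<in>K. 0 \<le> u k \<and> order_point L (z k)" "sum u K = 1"
  shows "order_point L (\<lambda>p. \<Sum>k\<in>K. u k * z k p)"
proof -
  have upper: "(\<Sum>k\<in>K. u k * z k p) \<le> L a" if "p \<in> P - A" "a \<in> A" "lt p a" for p a
  proof -
    have "(\<Sum>k\<in>K. u k * z k p) \<le> (\<Sum>k\<in>K. u k * L a)"
      using assms that unfolding order_point_def by (intro sum_mono mult_left_mono) auto
    then show ?thesis using assms(3) by (simp flip: sum_distrib_right)
  qed
  have lower: "L b \<le> (\<Sum>k\<in>K. u k * z k q)" if "b \<in> A" "q \<in> P - A" "lt b q" for b q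
  proof -
    have "(\<Sum>k\<in>K. u k * L b) \<le> (\<Sum>k\<in>K. u k * z k q)"
      using assms that unfolding order_point_def by (intro sum_mono mult_left_mono) auto
    then show ?thesis using assms(3) by (simp flip: sum_distrib_right)
  qed
  have mono: "(\<Sum>k\<in>K. u k * z k p) \<le> (\<Sum>k\<in>K. u k * z k q)"
    if "p \<in> P - A" "q \<in> P - A" "lt p q" for p q
    using assms that unfolding order_point_def by (intro sum_mono mult_left_mono) auto
  have zero: "(\<Sum>k\<in>K. u k * z k p) = 0" if "p \<notin> P - A" for p
    using assms(2) that unfolding order_point_def by simp
  show ?thesis unfolding order_point_def using upper lower mono zero by blast
qed

lemma chain_point_convex_sum:
  assumes "finite K" "\<forall>k\<in>K. 0 \<le> u k \<and> chain_point L (z k)" "sum u K = 1"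
  shows "chain_point L (\<lambda>p. \<Sum>k\<in>K. u k * z k p)"
proof -
  have chains: "sum_list (map (\<lambda>p. \<Sum>k\<in>K. u k * z k p) ps) \<le> L a - L b"
    if "a \<in> A" "b \<in> A" "unmarked_chain ps" "lt b (last ps)" "lt (hd ps) a" for a b ps
  proof -
    have "sum_list (map (\<lambda>p. \<Sum>k\<in>K. u k * z k p) ps) = (\<Sum>k\<in>K. u k * sum_list (map (z k) ps))"
      by (simp add: sum_list_sum_swap sum_list_const_mult)
    also have "\<dots> \<le> (\<Sum>k\<in>K. u k * (L a - L b))"
      using assms that chain_pointD by (intro sum_mono mult_left_mono) auto
    also have "\<dots> = L a - L b" using assms(3) by (simp flip: sum_distrib_right)
    finally show ?thesis .
  qed
  have nonneg: "0 \<le> (\<Sum>k\<in>K. u k * z k p)" if "p \<in> P - A" for p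
    using assms that unfolding chain_point_def by (intro sum_nonneg) auto
  have zero: "(\<Sum>k\<in>K. u k * z k p) = 0" if "p \<notin> P - A" for p
    using assms(2) that unfolding chain_point_def by simp
  show ?thesis unfolding chain_point_def using chains nonneg zero by blast
qed

lemma order_point_scale:
  assumes "0 < c"
  shows "order_point (\<lambda>a. c * L a) (\<lambda>p. c * y p) \<longleftrightarrow> order_point L y"
  using assms unfolding order_point_def by simp

lemma chain_point_scale:
  assumes "0 < c"
  shows "chain_point (\<lambda>a. c * L a) (\<lambda>p. c * y p) \<longleftrightarrow> chain_point L y"
  using assms unfolding chain_point_def
  by (simp add: sum_list_const_mult zero_le_mult_iff flip: right_diff_distrib)

lemma order_point_bounds:
  assumes "order_point L x" "p \<in> P - A"
  shows "Min (L ` A) \<le> x p" "x p \<le> Max (L ` A)"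
proof -
  obtain b a where "b \<in> A" "lt b p" "a \<in> A" "lt p a"
    using exists_marked_below exists_marked_above assms(2) by blast
  moreover have "L b \<le> x p" "x p \<le> L a" using assms calculation unfolding order_point_def by auto
  moreover have "Min (L ` A) \<le> L b" "L a \<le> Max (L ` A)" using finite_A calculation by simp_all
  ultimately show "Min (L ` A) \<le> x p" "x p \<le> Max (L ` A)" by linarith+
qed

lemma chain_point_bounds:
  assumes "chain_point L x" "p \<in> P - A"
  shows "0 \<le> x p" "x p \<le> Max (L ` A) - Min (L ` A)"
proof -
  obtain b a where "b \<in> A" "lt b p" "a \<in> A" "lt p a"
    using exists_marked_below exists_marked_above assms(2) by blast
  moreover from this have "x p \<le> L a - L b"
    using chain_pointD[OF assms(1), of a b "[p]"] assms(2) by (simp add: unmarked_chain_def)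
  moreover have "Min (L ` A) \<le> L b" "L a \<le> Max (L ` A)" using finite_A calculation by simp_all
  ultimately show "x p \<le> Max (L ` A) - Min (L ` A)" by linarith
  show "0 \<le> x p" using assms unfolding chain_point_def by blast
qed

definition map_unmarked :: "(real \<Rightarrow> real) \<Rightarrow> ('a \<Rightarrow> real) \<Rightarrow> 'a \<Rightarrow> real" where
  "map_unmarked h x p = (if p \<in> P - A then h (x p) else 0)"

lemma order_point_map_unmarked:
  assumes "order_point L' x" "mono h" "\<forall>a\<in>A. h (L' a) = L a"
  shows "order_point L (map_unmarked h x)"
proof -
  have "h (x p) \<le> h (x q)" if "x p \<le> x q" for p q using assms(2) that by (rule monoD)
  moreover have "h (x p) \<le> L a" if "a \<in> A" "x p \<le> L' a" for p a
    using assms(2,3) that by (metis monoD)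
  moreover have "L b \<le> h (x q)" if "b \<in> A" "L' b \<le> x q" for b q
    using assms(2,3) that by (metis monoD)
  ultimately show ?thesis using assms(1) unfolding order_point_def map_unmarked_def by auto
qed

lemma transfer_map_unmarked:
  assumes "mono h" "\<forall>a\<in>A. h (L' a) = L a" "p \<in> P - A"
  shows "transfer L (map_unmarked h x) p = h (x p) - h (lower_max L' x p)"
proof -
  have "lower_values L (map_unmarked h x) p = h ` lower_values L' x p"
    unfolding lower_values_def map_unmarked_def image_Un image_image using assms(2)
    by (intro arg_cong2[where f="(\<union>)"] image_cong) auto
  then have "lower_max L (map_unmarked h x) p = h (lower_max L' x p)"
    unfolding lower_max_def
    using mono_Max_commute[OF assms(1) finite_lower_values lower_values_nonempty[OF assms(3)]] by simp
  then show ?thesis using assms(3) by (simp add: transfer_def map_unmarked_def)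
qed

text \<open>The transfer only compares values of x and of marks, and monotone maps commute with the
  maximum, so reproducing those values is enough to split the transfer as well.\<close>

lemma order_point_decomposition:
  assumes x: "order_point L' x" and "finite K" and mono: "\<forall>k\<in>K. mono (h k)"
    and marks: "\<forall>k\<in>K. \<forall>a\<in>A. h k (L' a) = L a"
    and reproduce: "\<forall>v\<in>x ` (P - A) \<union> L' ` A. (\<Sum>k\<in>K. w k * h k v) = v"
  shows "x = (\<lambda>p. \<Sum>k\<in>K. w k * map_unmarked (h k) x p)"
    and "transfer L' x = (\<lambda>p. \<Sum>k\<in>K. w k * transfer L (map_unmarked (h k) x) p)"
proof -
  show "x = (\<lambda>p. \<Sum>k\<in>K. w k * map_unmarked (h k) x p)"
  proof
    fix p show "x p = (\<Sum>k\<in>K. w k * map_unmarked (h k) x p)"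
    proof (cases "p \<in> P - A")
      case False
      then show ?thesis using x unfolding order_point_def map_unmarked_def by auto
    qed (use reproduce in \<open>simp add: map_unmarked_def\<close>)
  qed
  show "transfer L' x = (\<lambda>p. \<Sum>k\<in>K. w k * transfer L (map_unmarked (h k) x) p)"
  proof
    fix p show "transfer L' x p = (\<Sum>k\<in>K. w k * transfer L (map_unmarked (h k) x) p)"
    proof (cases "p \<in> P - A")
      case True
      have "lower_max L' x p \<in> x ` (P - A) \<union> L' ` A"
        using lower_max_in[OF True, of L' x] unfolding lower_values_def by auto
      have "(\<Sum>k\<in>K. w k * transfer L (map_unmarked (h k) x) p)
          = (\<Sum>k\<in>K. w k * h k (x p) - w k * h k (lower_max L' x p))"
      proof (rule sum.cong)
        fix k assume "k \<in> K"
        then have "transfer L (map_unmarked (h k) x) p = h k (x p) - h k (lower_max L' x p)"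
          using mono marks by (intro transfer_map_unmarked True) auto
        then show "w k * transfer L (map_unmarked (h k) x) p
            = w k * h k (x p) - w k * h k (lower_max L' x p)"
          by (simp add: right_diff_distrib)
      qed simp
      also have "\<dots> = (\<Sum>k\<in>K. w k * h k (x p)) - (\<Sum>k\<in>K. w k * h k (lower_max L' x p))"
        by (rule sum_subtractf)
      also have "\<dots> = transfer L' x p"
        using reproduce \<open>lower_max L' x p \<in> _\<close> True by (simp add: transfer_def)
      finally show ?thesis ..
    next
      case False then show ?thesis by (auto simp: transfer_def)
    qed
  qed
qed

lemma map_unmarked_lattice_point:
  assumes "order_point L' x" "mono h" "\<forall>a\<in>A. h (L' a) = L a" "\<forall>v. h v \<in> \<int>"
  shows "map_unmarked h x \<in> lattice_points (Collect (order_point L))"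
  using order_point_map_unmarked[OF assms(1-3)] assms(4)
  unfolding lattice_points_def map_unmarked_def by auto

lemma transfer_lattice_point:
  assumes "\<forall>a\<in>A. L a \<in> \<int>" "z \<in> lattice_points (Collect (order_point L))"
  shows "transfer L z \<in> lattice_points (Collect (chain_point L))"
  using assms chain_point_transfer transfer_Ints unfolding lattice_points_def by auto

lemma order_point_floor_decomposition:
  assumes x: "order_point L x" and L: "\<forall>a\<in>A. L a \<in> \<int>"
  obtains T w z where "finite (T :: real set)"
    "\<forall>t\<in>T. 0 \<le> w t \<and> z t \<in> lattice_points (Collect (order_point L))" "sum w T = 1" "x = (\<lambda>p. \<Sum>t\<in>T. w t * z t p)"
    "transfer L x = (\<lambda>p. \<Sum>t\<in>T. w t * transfer L (z t) p)"
proof -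
  have fin: "finite (x ` (P - A) \<union> L ` A)" using finite_P finite_A by simp
  obtain T w where T: "finite T" "T \<subseteq> {0..<1}" "\<forall>t\<in>T. 0 \<le> w t" "sum w T = 1"
    and reproduce: "\<And>v. v \<in> x ` (P - A) \<union> L ` A \<Longrightarrow> (\<Sum>t\<in>T. w t * real_of_int \<lfloor>v + t\<rfloor>) = v"
    using convex_sum_floor_shifts[OF fin] by blast
  define h where "h t v = real_of_int \<lfloor>v + t\<rfloor>" for t v :: real
  have mono: "\<forall>t\<in>T. mono (h t)" unfolding h_def by (intro ballI monoI) (simp add: floor_mono)
  have marks: "\<forall>t\<in>T. \<forall>a\<in>A. h t (L a) = L a"
  proof (intro ballI)
    fix t a assume "t \<in> T" "a \<in> A"
    then have "0 \<le> t" "t < 1" using T(2) by auto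
    moreover obtain m where "L a = real_of_int m" using L \<open>a \<in> A\<close> by (blast elim: Ints_cases)
    ultimately show "h t (L a) = L a" unfolding h_def by (simp add: floor_eq_iff)
  qed
  define z where "z t = map_unmarked (h t) x" for t
  have lattice: "\<forall>t\<in>T. 0 \<le> w t \<and> z t \<in> lattice_points (Collect (order_point L))"
    unfolding z_def using T(3) mono marks
    by (simp add: map_unmarked_lattice_point[OF x] h_def)
  have "\<forall>v\<in>x ` (P - A) \<union> L ` A. (\<Sum>t\<in>T. w t * h t v) = v"
    unfolding h_def using reproduce by blast
  note decomposition = order_point_decomposition[OF x T(1) mono marks this, folded z_def]
  show thesis using T(1) lattice T(4) decomposition by (rule that)
qed

lemma order_point_dilate_decomposition:
  assumes n: "n \<ge> 1" and x: "order_point (\<lambda>a. real n * L a) x" "\<forall>p. x p \<in> \<int>"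
    and L: "\<forall>a\<in>A. L a \<in> \<int>"
  obtains z where "\<forall>k<n. z k \<in> lattice_points (Collect (order_point L))"
    "x = (\<lambda>p. \<Sum>k<n. z k p)" "transfer (\<lambda>a. real n * L a) x = (\<lambda>p. \<Sum>k<n. transfer L (z k) p)"
proof -
  define h where "h k v = real_of_int \<lfloor>(v + real k) / real n\<rfloor>" for k and v :: real
  have mono: "\<forall>k\<in>{..<n}. mono (h k)"
    unfolding h_def by (intro ballI monoI) (simp add: floor_mono divide_right_mono)
  have marks: "\<forall>k\<in>{..<n}. \<forall>a\<in>A. h k (real n * L a) = L a"
  proof (intro ballI)
    fix k a assume "k \<in> {..<n}" "a \<in> A"
    then obtain m where m: "L a = real_of_int m" and "k < n" using L by (blast elim: Ints_cases)
    then have "(real n * L a + real k) / real n = real_of_int m + real k / real n"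
        "0 \<le> real k / real n" "real k / real n < 1"
      using n by (auto simp: field_simps)
    then show "h k (real n * L a) = L a" unfolding h_def m by (simp add: floor_eq_iff)
  qed
  have "\<forall>v\<in>x ` (P - A) \<union> (\<lambda>a. real n * L a) ` A. (\<Sum>k\<in>{..<n}. 1 * h k v) = v"
    using x(2) L sum_floor_shift_div_eq[OF _ n] unfolding h_def by auto
  note decomposition = order_point_decomposition[OF x(1) finite_lessThan mono marks this]
  have lattice: "\<forall>k<n. map_unmarked (h k) x \<in> lattice_points (Collect (order_point L))"
    using mono marks by (simp add: map_unmarked_lattice_point[OF x(1)] h_def)
  show thesis using that[OF lattice] decomposition by simp
qed

lemma finite_lattice_points_order_points: "finite (lattice_points (Collect (order_point L)))"
proof (rule finite_lattice_points_bounded)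
  show "finite (P - A)" using finite_P by simp
  fix x p assume "x \<in> Collect (order_point L)"
  then have x: "order_point L x" by simp
  then have "p \<notin> P - A \<Longrightarrow> x p = 0" unfolding order_point_def by blast
  then show "(p \<in> P - A \<longrightarrow> Min (L ` A) \<le> x p \<and> x p \<le> Max (L ` A)) \<and> (p \<notin> P - A \<longrightarrow> x p = 0)"
    using order_point_bounds[OF x] by blast
qed

lemma finite_lattice_points_chain_points: "finite (lattice_points (Collect (chain_point L)))"
proof (rule finite_lattice_points_bounded)
  show "finite (P - A)" using finite_P by simp
  fix x p assume "x \<in> Collect (chain_point L)"
  then have x: "chain_point L x" by simp
  then have "p \<notin> P - A \<Longrightarrow> x p = 0" unfolding chain_point_def by blast
  then show "(p \<in> P - A \<longrightarrow> 0 \<le> x p \<and> x p \<le> Max (L ` A) - Min (L ` A)) \<and> (p \<notin> P - A \<longrightarrow> x p = 0)"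
    using chain_point_bounds[OF x] by blast
qed

lemma lattice_polytope_order_points:
  assumes "\<forall>a\<in>A. L a \<in> \<int>" shows "lattice_polytope (Collect (order_point L))"
proof (rule lattice_polytopeI)
  fix x assume "x \<in> Collect (order_point L)"
  then have "order_point L x" by simp
  then obtain T w z where "finite (T :: real set)"
    "\<forall>t\<in>T. 0 \<le> w t \<and> z t \<in> lattice_points (Collect (order_point L))"
    "sum w T = 1" "x = (\<lambda>p. \<Sum>t\<in>T. w t * z t p)"
    by (rule order_point_floor_decomposition[OF _ assms])
  then show "\<exists>(K :: real set) w z. finite K \<and>
      (\<forall>k\<in>K. 0 \<le> w k \<and> z k \<in> lattice_points (Collect (order_point L))) \<and>
      sum w K = 1 \<and> x = (\<lambda>p. \<Sum>k\<in>K. w k * z k p)"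
    by blast
qed (use order_point_convex_sum finite_lattice_points_order_points in auto)

lemma lattice_polytope_chain_points:
  assumes "\<forall>a\<in>A. L a \<in> \<int>" shows "lattice_polytope (Collect (chain_point L))"
proof (rule lattice_polytopeI)
  fix y assume "y \<in> Collect (chain_point L)"
  then have x: "order_point L (transfer_inv L y)" and y: "transfer L (transfer_inv L y) = y"
    using order_point_transfer_inv transfer_transfer_inv by simp_all
  obtain T w z where T: "finite (T :: real set)"
    "\<forall>t\<in>T. 0 \<le> w t \<and> z t \<in> lattice_points (Collect (order_point L))"
    "sum w T = 1" "y = (\<lambda>p. \<Sum>t\<in>T. w t * transfer L (z t) p)"
    by (rule order_point_floor_decomposition[OF x assms, unfolded y])
  then have "\<forall>t\<in>T. 0 \<le> w t \<and> transfer L (z t) \<in> lattice_points (Collect (chain_point L))"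
    using transfer_lattice_point[OF assms] by blast
  with T show "\<exists>(K :: real set) w z. finite K \<and>
      (\<forall>k\<in>K. 0 \<le> w k \<and> z k \<in> lattice_points (Collect (chain_point L))) \<and>
      sum w K = 1 \<and> y = (\<lambda>p. \<Sum>k\<in>K. w k * z k p)"
    by (intro exI[of _ T] exI[of _ w] exI[of _ "\<lambda>t. transfer L (z t)"]) simp
qed (use chain_point_convex_sum finite_lattice_points_chain_points in auto)

lemma dilate_order_points:
  "n \<ge> 1 \<Longrightarrow> dilate n (Collect (order_point L)) = Collect (order_point (\<lambda>a. real n * L a))"
  by (rule dilate_Collect) (simp_all add: order_point_scale)

lemma dilate_chain_points:
  "n \<ge> 1 \<Longrightarrow> dilate n (Collect (chain_point L)) = Collect (chain_point (\<lambda>a. real n * L a))"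
  by (rule dilate_Collect) (simp_all add: chain_point_scale)

lemma normal_polytope_order_points:
  assumes "\<forall>a\<in>A. L a \<in> \<int>" shows "normal_polytope (Collect (order_point L))"
proof (rule normal_polytopeI)
  fix n :: nat and x assume n: "n \<ge> 1" and "x \<in> lattice_points (dilate n (Collect (order_point L)))"
  then have "order_point (\<lambda>a. real n * L a) x" "\<forall>p. x p \<in> \<int>"
    unfolding lattice_points_def dilate_order_points[OF n] by auto
  then obtain z where "\<forall>k<n. z k \<in> lattice_points (Collect (order_point L))" "x = (\<lambda>p. \<Sum>k<n. z k p)"
    using order_point_dilate_decomposition[OF n _ _ assms] by metis
  then show "\<exists>z. (\<forall>k<n. z k \<in> lattice_points (Collect (order_point L))) \<and> x = (\<lambda>p. \<Sum>k<n. z k p)"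
    by blast
qed (use order_point_convex_sum in auto)

lemma normal_polytope_chain_points:
  assumes L: "\<forall>a\<in>A. L a \<in> \<int>" shows "normal_polytope (Collect (chain_point L))"
proof (rule normal_polytopeI)
  fix n :: nat and y assume n: "n \<ge> 1" and "y \<in> lattice_points (dilate n (Collect (chain_point L)))"
  then have y: "chain_point (\<lambda>a. real n * L a) y" "\<forall>p. y p \<in> \<int>"
    unfolding lattice_points_def dilate_chain_points[OF n] by auto
  define x where "x = transfer_inv (\<lambda>a. real n * L a) y"
  have "order_point (\<lambda>a. real n * L a) x" "transfer (\<lambda>a. real n * L a) x = y"
    unfolding x_def using order_point_transfer_inv transfer_transfer_inv y(1) by simp_all
  moreover have "\<forall>p. x p \<in> \<int>" unfolding x_def using transfer_inv_Ints y(2) L by simp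
  ultimately obtain z where "\<forall>k<n. z k \<in> lattice_points (Collect (order_point L))"
      "y = (\<lambda>p. \<Sum>k<n. transfer L (z k) p)"
    using order_point_dilate_decomposition[OF n _ _ L] by metis
  then show "\<exists>z. (\<forall>k<n. z k \<in> lattice_points (Collect (chain_point L))) \<and> y = (\<lambda>p. \<Sum>k<n. z k p)"
    using transfer_lattice_point[OF L] by (intro exI[of _ "\<lambda>k. transfer L (z k)"]) auto
qed (use chain_point_convex_sum in auto)

end

theorem corollary2p3:
  fixes P A :: "'a set" and lt :: "'a \<Rightarrow> 'a \<Rightarrow> bool" and lam :: "'a \<Rightarrow> nat"
  assumes "marked_poset P lt A"
  shows "lattice_polytope (marked_order_polytope P lt A lam) \<and>
         normal_polytope (marked_order_polytope P lt A lam) \<and>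
         lattice_polytope (marked_chain_polytope P lt A lam) \<and>
         normal_polytope (marked_chain_polytope P lt A lam)"
proof -
  interpret marked_poset_structure P lt A by (fact marked_poset_structure.intro[OF assms])
  have L: "\<forall>a\<in>A. real (lam a) \<in> \<int>" by simp
  show ?thesis
    unfolding marked_order_polytope_eq marked_chain_polytope_eq
    by (intro conjI lattice_polytope_order_points[OF L] normal_polytope_order_points[OF L]
        lattice_polytope_chain_points[OF L] normal_polytope_chain_points[OF L])
qed

end
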